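(* Let $\hat\Omega\in\mathfrak{R}^n$, let $f:\hat\Omega\to\mathbb{R}^n$ and $G:\hat\Omega\to\mathbb{R}^{n\times m}$ with $f(0)=0$, and consider $\dot x=f(x)+G(x)u$, $x\in\hat\Omega$, with $u=\kappa(t)$ for $t\ge0$. Let $\mathcal{T}=\{\sigma_i\}_{i=1}^{m_{\mathcal{T}}}$, $\sigma_i=\mathrm{co}(\{x_{i,j}\}_{j=0}^n)$, be a triangulation of $\hat\Omega$ with $f,G\in\mathcal{C}^2(\mathcal{T})$. Let $\mathcal{A}_1\in\mathfrak{R}^n$ with $\mathcal{A}_1\subset\hat\Omega$ and $\partial\mathcal{A}_1$ contained in the union of the boundaries $\partial\sigma_i$, and let $\mathbb{I}_1=\{i\in\mathbb{Z}_1^{m_{\mathcal{T}}}:\sigma_i\not\subseteq\mathcal{A}_1\}$. For each $i$ let $\beta_i\ge\max_{p,q,r\in\mathbb{Z}_1^n}\max_{\xi\in\sigma_i}\big|\partial^2 f^{(p)}/\partial x^{(q)}\partial x^{(r)}(\xi)\big|$, let $\hat g_i=\max_{x\in\sigma_i}\|G(x)\|_\infty$, and let $c_{i,j}=\tfrac{n}{2}\|x_{i,j}-x_{i,0}\|_2(\max_{k\in\mathbb{Z}_1^n}\|x_{i,k}-x_{i,0}\|_2+\|x_{i,j}-x_{i,0}\|_2)$. For vertex values $\mathbf{W}=\{W_x\}_{x\in\mathbb{E}_{\mathcal{T}}}$, vectors $\hat{\mathbf{L}}=\{\hat l_i\}\subset\mathbb{R}^n$ and scalars $b_2,\hat u$,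 set $D^+_{i,j}W=f(x_{i,j})^\intercal\nabla W_i+(1_n^\intercal\hat l_i)(\beta_i c_{i,j}+\hat g_i\hat u)$. Then there exist $\mathbf{W},\hat{\mathbf{L}},b_2,\hat u$ satisfying (i) $\hat u>0$; (ii) $W_x>0$ for all $x\in\mathbb{E}_{\mathcal{T}}$; (iii) $|\nabla W_i|\le\hat l_i$ (componentwise) for all $i$; (iv) $D^+_{i,j}W\le -b_2$ for all $i\in\mathbb{I}_1$, $j\in\mathbb{Z}_0^n$. Suppose further that such values satisfy $b_2>0$ and that there is a sublevel set $\mathcal{A}=\{x\in\hat\Omega: W(x)\le c\}$ of the CPA interpolation $W$ of $\mathbf{W}$ with $\mathcal{A}_1\subset\mathcal{A}\subseteq\hat\Omega$. Then, provided $\|\kappa(t)\|_\infty\le\hat u$ for all $t\ge0$, the restriction of $W$ to $\mathcal{A}^\circ$ is a barrier function, i.e.: $W$ is Lipschitz, $W(x)>0$ for all $x\in\hat\Omega$, and $D^+W(x)\le -b_2$ for all $x\in(\hat\Omega\setminus\mathcal{A}_1)^\circ$, where $D^+W$ is the Dini derivative of $W$ along $\dot x=f(x)+G(x)u$ with $\|u\|_\infty\le\hat u$.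
   Context: $\mathfrak{R}^n$: compact sets $\Omega\subset\mathbb{R}^n$ with connected interior containing $0$ and $\Omega=\overline{\Omega^\circ}$. A triangulation of $\Omega$ is a finite collection of $n$-simplexes (convex hulls of $n+1$ affinely independent vertices) with union $\Omega$, any two meeting in a common face or not at all; $\mathbb{E}_{\mathcal{T}}$ is its vertex set; the vertex $x_{i,0}$ is arbitrary unless $0\in\sigma_i$, in which case $x_{i,0}=0$. $\mathcal{C}^2(\mathcal{T})$: continuous and $\mathcal{C}^2$ on each simplex. With $X_i$ the matrix with rows $(x_{i,j}-x_{i,0})^\intercal$ and $\bar W_i$ the vector with entries $W_{x_{i,j}}-W_{x_{i,0}}$, $\nabla W_i=X_i^{-1}\bar W_i$, and the CPA interpolation $W$ is the unique continuous function affine on each $\sigma_i$ with gradient $\nabla W_i$ and $W(x)=W_x$ at vertices. The Dini derivative is $D^+W(x)=\limsup_{h\to0^+}(W(x+h\,v)-W(x))/h$ with $v=f(x)+G(x)u$. $\|G\|_\infty$ is the induced $\infty$-norm, $1_n$ the all-ones vector, $|v|$ componentwise absolute value. *)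

theory Defs
  imports "HOL-Analysis.Analysis"
begin

definition region :: "(real^'n) set \<Rightarrow> bool" where
  "region \<Omega> \<longleftrightarrow> compact \<Omega> \<and> connected (interior \<Omega>) \<and> 0 \<in> interior \<Omega>
      \<and> \<Omega> = closure (interior \<Omega>)"

definition tsimplex :: "(nat \<Rightarrow> nat \<Rightarrow> real^'n) \<Rightarrow> nat \<Rightarrow> (real^'n) set" where
  "tsimplex x i = convex hull (x i ` {0..CARD('n)})"

definition triangulation :: "(real^'n) set \<Rightarrow> nat \<Rightarrow> (nat \<Rightarrow> nat \<Rightarrow> real^'n) \<Rightarrow> bool" where
  "triangulation \<Omega> mT x \<longleftrightarrow>
     (\<forall>i\<in>{1..mT}. inj_on (x i) {0..CARD('n)} \<and> \<not> affine_dependent (x i ` {0..CARD('n)}))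
   \<and> (\<Union>i\<in>{1..mT}. tsimplex x i) = \<Omega>
   \<and> (\<forall>i\<in>{1..mT}. \<forall>k\<in>{1..mT}. i \<noteq> k \<longrightarrow>
        tsimplex x i \<inter> tsimplex x k = convex hull (x i ` {0..CARD('n)} \<inter> x k ` {0..CARD('n)}))
   \<and> (\<forall>i\<in>{1..mT}. 0 \<in> tsimplex x i \<longrightarrow> x i 0 = 0)"

definition vertices :: "nat \<Rightarrow> (nat \<Rightarrow> nat \<Rightarrow> real^'n) \<Rightarrow> (real^'n) set" where
  "vertices mT x = (\<Union>i\<in>{1..mT}. x i ` {0..CARD('n)})"

definition second_partials ::
  "(real^'n \<Rightarrow> real) \<Rightarrow> (real^'n) set \<Rightarrow> ('n \<Rightarrow> 'n \<Rightarrow> real^'n \<Rightarrow> real) \<Rightarrow> bool" where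
  "second_partials g S d2 \<longleftrightarrow> (\<exists>d1 :: 'n \<Rightarrow> real^'n \<Rightarrow> real.
      (\<forall>y\<in>S. (g has_derivative (\<lambda>h. \<Sum>q\<in>UNIV. d1 q y * h $ q)) (at y within S))
    \<and> (\<forall>q. \<forall>y\<in>S. (d1 q has_derivative (\<lambda>h. \<Sum>r\<in>UNIV. d2 q r y * h $ r)) (at y within S)))"

definition C2_on :: "(real^'n \<Rightarrow> real) \<Rightarrow> (real^'n) set \<Rightarrow> bool" where
  "C2_on g S \<longleftrightarrow> (\<exists>d2. second_partials g S d2 \<and> (\<forall>q r. continuous_on S (d2 q r)))"

text \<open>Induced infinity norm of a matrix (max absolute row sum).\<close>
definition matnorm_inf :: "real^'m^'n \<Rightarrow> real" where
  "matnorm_inf A = Max (range (\<lambda>p. \<Sum>k\<in>UNIV. \<bar>A $ p $ k\<bar>))"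

text \<open>A fixed enumeration of the index type 'n by 1..n (rows j = 1..n of X_i).\<close>
definition vidx :: "'n::finite \<Rightarrow> nat" where
  "vidx = (SOME e. bij_betw e (UNIV :: 'n set) {1..CARD('n)})"

definition Xmat :: "(nat \<Rightarrow> nat \<Rightarrow> real^'n) \<Rightarrow> nat \<Rightarrow> real^'n^'n" where
  "Xmat x i = (\<chi> k. x i (vidx k) - x i 0)"

definition Wbar :: "(nat \<Rightarrow> nat \<Rightarrow> real^'n) \<Rightarrow> (real^'n \<Rightarrow> real) \<Rightarrow> nat \<Rightarrow> real^'n" where
  "Wbar x Wv i = (\<chi> k. Wv (x i (vidx k)) - Wv (x i 0))"

definition cpa_grad :: "(nat \<Rightarrow> nat \<Rightarrow> real^'n) \<Rightarrow> (real^'n \<Rightarrow> real) \<Rightarrow> nat \<Rightarrow> real^'n" where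
  "cpa_grad x Wv i = matrix_inv (Xmat x i) *v Wbar x Wv i"

definition cpa :: "nat \<Rightarrow> (nat \<Rightarrow> nat \<Rightarrow> real^'n) \<Rightarrow> (real^'n \<Rightarrow> real) \<Rightarrow> real^'n \<Rightarrow> real" where
  "cpa mT x Wv y = (let i = (SOME i. i \<in> {1..mT} \<and> y \<in> tsimplex x i)
                    in Wv (x i 0) + cpa_grad x Wv i \<bullet> (y - x i 0))"

definition ghat :: "(real^'n \<Rightarrow> real^'m^'n) \<Rightarrow> (nat \<Rightarrow> nat \<Rightarrow> real^'n) \<Rightarrow> nat \<Rightarrow> real" where
  "ghat G x i = Sup ((\<lambda>y. matnorm_inf (G y)) ` tsimplex x i)"

definition cij :: "(nat \<Rightarrow> nat \<Rightarrow> real^'n) \<Rightarrow> nat \<Rightarrow> nat \<Rightarrow> real" where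
  "cij x i j = real CARD('n) / 2 * norm (x i j - x i 0)
      * (Max ((\<lambda>k. norm (x i k - x i 0)) ` {1..CARD('n)}) + norm (x i j - x i 0))"

definition Dij :: "(real^'n \<Rightarrow> real^'n) \<Rightarrow> (real^'n \<Rightarrow> real^'m^'n) \<Rightarrow> (nat \<Rightarrow> nat \<Rightarrow> real^'n)
    \<Rightarrow> (nat \<Rightarrow> real) \<Rightarrow> (real^'n \<Rightarrow> real) \<Rightarrow> (nat \<Rightarrow> real^'n) \<Rightarrow> real \<Rightarrow> nat \<Rightarrow> nat \<Rightarrow> real" where
  "Dij f G x \<beta> Wv l uh i j = f (x i j) \<bullet> cpa_grad x Wv i
      + (\<Sum>k\<in>UNIV. l i $ k) * (\<beta> i * cij x i j + ghat G x i * uh)"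

definition I1 :: "nat \<Rightarrow> (nat \<Rightarrow> nat \<Rightarrow> real^'n) \<Rightarrow> (real^'n) set \<Rightarrow> nat set" where
  "I1 mT x A1 = {i\<in>{1..mT}. \<not> tsimplex x i \<subseteq> A1}"

definition cpa_conditions :: "(real^'n \<Rightarrow> real^'n) \<Rightarrow> (real^'n \<Rightarrow> real^'m^'n) \<Rightarrow> nat
    \<Rightarrow> (nat \<Rightarrow> nat \<Rightarrow> real^'n) \<Rightarrow> (nat \<Rightarrow> real) \<Rightarrow> (real^'n) set
    \<Rightarrow> (real^'n \<Rightarrow> real) \<Rightarrow> (nat \<Rightarrow> real^'n) \<Rightarrow> real \<Rightarrow> real \<Rightarrow> bool" where
  "cpa_conditions f G mT x \<beta> A1 Wv l b2 uh \<longleftrightarrow>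
      uh > 0
    \<and> (\<forall>y\<in>vertices mT x. Wv y > 0)
    \<and> (\<forall>i\<in>{1..mT}. \<forall>k. \<bar>cpa_grad x Wv i $ k\<bar> \<le> l i $ k)
    \<and> (\<forall>i\<in>I1 mT x A1. \<forall>j\<in>{0..CARD('n)}. Dij f G x \<beta> Wv l uh i j \<le> - b2)"

definition dini_upper :: "(real^'n \<Rightarrow> real) \<Rightarrow> real^'n \<Rightarrow> real^'n \<Rightarrow> ereal" where
  "dini_upper W y v = Limsup (at_right 0) (\<lambda>h. ereal ((W (y + h *\<^sub>R v) - W y) / h))"

end

theory Submission
  imports Defs
begin

text \<open>On each simplex \<open>\<sigma>\<^sub>i\<close> the CPA interpolation \<open>W\<close> is affine with gradient \<open>\<nabla>W\<^sub>i\<close>. Hence it is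
  positive wherever its vertex values are, and since from an interior point every ray stays in a
  single simplex for a short time, \<open>D\<^sup>+W(y) = \<nabla>W\<^sub>i \<bullet> v\<close>. Writing \<open>y\<close> as a convex combination
  \<open>\<Sum>\<^sub>j \<lambda>\<^sub>j x\<^sub>i\<^sub>,\<^sub>j\<close>, a second-order Taylor expansion of \<open>f\<close> about \<open>x\<^sub>i\<^sub>,\<^sub>0\<close> bounds each component of
  \<open>f(y) - \<Sum>\<^sub>j \<lambda>\<^sub>j f(x\<^sub>i\<^sub>,\<^sub>j)\<close> by \<open>\<Sum>\<^sub>j \<lambda>\<^sub>j \<beta>\<^sub>i c\<^sub>i\<^sub>,\<^sub>j\<close>; together with \<open>|\<nabla>W\<^sub>i| \<le> l\<^sub>i\<close> and
  \<open>|(G(y)u)\<^sub>p| \<le> ghat\<^sub>i uh\<close> this gives \<open>\<nabla>W\<^sub>i \<bullet> (f(y) + G(y)u) \<le> \<Sum>\<^sub>j \<lambda>\<^sub>j D\<^sup>+\<^sub>i\<^sub>,\<^sub>jW \<le> -b\<^sub>2\<close>.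
  Since \<open>\<Omega>\<close> need not be convex, the Lipschitz bound is obtained by comparing the affine pieces of
  each pair of simplices directly rather than along segments.

  Conditions (i)-(iv) are met by \<open>W \<equiv> 1\<close>, \<open>l = 0\<close>, \<open>b\<^sub>2 = 0\<close>, \<open>uh = 1\<close>.\<close>

section \<open>Second-order interpolation error\<close>

lemma abs_diff_le_if_abs_deriv_le:
  fixes \<rho> \<mu> :: "real \<Rightarrow> real"
  assumes "a \<le> b"
    and \<rho>: "\<And>s. s \<in> {a..b} \<Longrightarrow> (\<rho> has_real_derivative \<rho>' s) (at s within {a..b})"
    and \<mu>: "\<And>s. s \<in> {a..b} \<Longrightarrow> (\<mu> has_real_derivative \<mu>' s) (at s within {a..b})"
    and le: "\<And>s. s \<in> {a..b} \<Longrightarrow> \<bar>\<rho>' s\<bar> \<le> \<mu>' s"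
  shows "\<bar>\<rho> b - \<rho> a\<bar> \<le> \<mu> b - \<mu> a"
proof -
  have "\<sigma> * (\<rho> b - \<rho> a) \<le> \<mu> b - \<mu> a" if \<sigma>: "\<sigma> \<in> {1, -1}" for \<sigma> :: real
  proof -
    have "((\<lambda>s. \<sigma> * \<rho> s - \<mu> s) has_derivative (\<lambda>h. h * (\<sigma> * \<rho>' s - \<mu>' s))) (at s within {a..b})"
      if "a \<le> s" "s \<le> b" for s
      using \<rho>[of s] \<mu>[of s] that
      by (auto intro!: derivative_eq_intros simp: has_field_derivative_def algebra_simps)
    from mvt_very_simple[OF \<open>a \<le> b\<close> this]
    obtain s where s: "s \<in> {a..b}"
      and mvt: "(\<sigma> * \<rho> b - \<mu> b) - (\<sigma> * \<rho> a - \<mu> a) = (b - a) * (\<sigma> * \<rho>' s - \<mu>' s)"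
      by auto
    have "\<sigma> * \<rho>' s \<le> \<mu>' s"
      using le[OF s] \<sigma> by (auto simp: abs_le_iff)
    then have "(b - a) * (\<sigma> * \<rho>' s - \<mu>' s) \<le> 0"
      using \<open>a \<le> b\<close> by (simp add: mult_nonneg_nonpos)
    then show ?thesis
      using mvt by (simp add: algebra_simps)
  qed
  from this[of 1] this[of "-1"] show ?thesis
    by (simp add: abs_le_iff)
qed

lemma has_real_derivative_along_line:
  fixes g :: "real^'n \<Rightarrow> real"
  assumes dg: "\<forall>y\<in>S. (g has_derivative (\<lambda>h. \<Sum>q\<in>UNIV. e q y * h $ q)) (at y within S)"
    and sub: "(\<lambda>t. a + t *\<^sub>R d) ` {0..1} \<subseteq> S" and t: "t \<in> {0..1}"
  shows "((\<lambda>t. g (a + t *\<^sub>R d)) has_real_derivative (\<Sum>q\<in>UNIV. e q (a + t *\<^sub>R d) * d $ q))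
           (at t within {0..1})"
proof -
  have "((\<lambda>t. a + t *\<^sub>R d) has_derivative (\<lambda>s. s *\<^sub>R d)) (at t within {0..1})"
    by (auto intro!: derivative_eq_intros)
  from has_derivative_in_compose2[OF _ sub t this, of g "\<lambda>y h. \<Sum>q\<in>UNIV. e q y * h $ q"] dg
  have "((\<lambda>t. g (a + t *\<^sub>R d)) has_derivative (\<lambda>s. \<Sum>q\<in>UNIV. e q (a + t *\<^sub>R d) * (s *\<^sub>R d) $ q))
          (at t within {0..1})"
    by auto
  moreover have "(\<lambda>s. \<Sum>q\<in>UNIV. e q (a + t *\<^sub>R d) * (s *\<^sub>R d) $ q)
      = (*) (\<Sum>q\<in>UNIV. e q (a + t *\<^sub>R d) * d $ q)"
    by (auto simp: sum_distrib_left algebra_simps)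
  ultimately show ?thesis
    by (simp add: has_field_derivative_def)
qed

lemma second_order_remainder_le:
  fixes \<phi> :: "real^'n \<Rightarrow> real"
  assumes "convex S" and a: "a \<in> S" and b: "b \<in> S"
    and d1: "\<forall>y\<in>S. (\<phi> has_derivative (\<lambda>h. \<Sum>q\<in>UNIV. d1 q y * h $ q)) (at y within S)"
    and d2: "\<forall>q. \<forall>y\<in>S. (d1 q has_derivative (\<lambda>h. \<Sum>r\<in>UNIV. d2 q r y * h $ r)) (at y within S)"
    and bnd: "\<forall>q r. \<forall>\<xi>\<in>S. \<bar>d2 q r \<xi>\<bar> \<le> \<beta>"
  shows "\<bar>\<phi> b - \<phi> a - (\<Sum>q\<in>UNIV. d1 q a * (b - a) $ q)\<bar> \<le> \<beta> / 2 * (\<Sum>q\<in>UNIV. \<bar>(b - a) $ q\<bar>)\<^sup>2"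
proof -
  define d where "d = b - a"
  define \<gamma> where "\<gamma> t = a + t *\<^sub>R d" for t :: real
  define D where "D t = (\<Sum>q\<in>UNIV. d1 q (\<gamma> t) * d $ q)" for t
  define D' where "D' t = (\<Sum>q\<in>UNIV. (\<Sum>r\<in>UNIV. d2 q r (\<gamma> t) * d $ r) * d $ q)" for t
  define M where "M = \<beta> * (\<Sum>q\<in>UNIV. \<bar>d $ q\<bar>)\<^sup>2"
  have sub: "(\<lambda>t. a + t *\<^sub>R d) ` {0..1} \<subseteq> S"
  proof clarify
    fix t :: real assume "t \<in> {0..1}"
    then have "(1 - t) *\<^sub>R a + t *\<^sub>R b \<in> S"
      using \<open>convex S\<close> a b by (auto simp: convex_alt)
    then show "a + t *\<^sub>R d \<in> S"
      by (simp add: d_def algebra_simps)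
  qed
  then have \<gamma>S: "\<gamma> t \<in> S" if "t \<in> {0..1}" for t
    using that by (auto simp: \<gamma>_def image_subset_iff)
  have d\<phi>: "((\<lambda>t. \<phi> (\<gamma> t)) has_real_derivative D t) (at t within {0..1})" if "t \<in> {0..1}" for t
    using has_real_derivative_along_line[OF d1 sub that] by (simp add: \<gamma>_def D_def)
  have dD: "(D has_real_derivative D' t) (at t within {0..1})" if "t \<in> {0..1}" for t
    unfolding D_def D'_def
    using has_real_derivative_along_line[OF _ sub that, of "d1 _" "d2 _"] d2
    by (intro DERIV_sum DERIV_cmult_right) (simp add: \<gamma>_def)
  have D'_le: "\<bar>D' t\<bar> \<le> M" if "t \<in> {0..1}" for t
  proof -
    have "\<bar>D' t\<bar> \<le> (\<Sum>q\<in>UNIV. (\<Sum>r\<in>UNIV. \<bar>d2 q r (\<gamma> t)\<bar> * \<bar>d $ r\<bar>) * \<bar>d $ q\<bar>)"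
      unfolding D'_def
      by (rule order_trans[OF sum_abs sum_mono])
         (auto simp: abs_mult intro!: mult_right_mono order_trans[OF sum_abs])
    also have "\<dots> \<le> (\<Sum>q\<in>UNIV. (\<Sum>r\<in>UNIV. \<beta> * \<bar>d $ r\<bar>) * \<bar>d $ q\<bar>)"
      using bnd \<gamma>S[OF that] by (intro sum_mono mult_right_mono) auto
    also have "\<dots> = M"
      by (simp add: M_def power2_eq_square sum_distrib_left sum_distrib_right algebra_simps)
    finally show ?thesis .
  qed
  have D_le: "\<bar>D t - D 0\<bar> \<le> M * t" if t: "t \<in> {0..1}" for t
  proof -
    have sub01: "{0..t} \<subseteq> {0..1}"
      using t by auto
    have "\<bar>D t - D 0\<bar> \<le> M * t - M * 0"
      using t D'_le sub01
      by (intro abs_diff_le_if_abs_deriv_le[where \<rho>'=D' and \<mu>'="\<lambda>_. M"])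
         (auto intro!: derivative_eq_intros has_field_derivative_subset[OF dD])
    then show ?thesis
      by simp
  qed
  define \<psi> where "\<psi> t = \<phi> (\<gamma> t) - t * D 0" for t
  have "\<bar>\<psi> 1 - \<psi> 0\<bar> \<le> M / 2 * 1\<^sup>2 - M / 2 * 0\<^sup>2"
    using D_le unfolding \<psi>_def
    by (intro abs_diff_le_if_abs_deriv_le[where \<rho>'="\<lambda>t. D t - D 0" and \<mu>'="\<lambda>t. M * t"])
       (auto intro!: derivative_eq_intros d\<phi>)
  moreover have "\<psi> 1 - \<psi> 0 = \<phi> b - \<phi> a - (\<Sum>q\<in>UNIV. d1 q a * (b - a) $ q)"
    by (simp add: \<psi>_def \<gamma>_def D_def d_def)
  ultimately show ?thesis
    by (simp add: M_def d_def)
qed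

lemma sum_abs_components_squared_le:
  fixes h :: "real^'n"
  shows "(\<Sum>q\<in>UNIV. \<bar>h $ q\<bar>)\<^sup>2 \<le> real CARD('n) * (norm h)\<^sup>2"
proof -
  have "(\<Sum>q\<in>UNIV. 1 * \<bar>h $ q\<bar>)\<^sup>2 \<le> (\<Sum>q\<in>(UNIV::'n set). 1\<^sup>2) * (\<Sum>q\<in>UNIV. \<bar>h $ q\<bar>\<^sup>2)"
    by (rule Cauchy_Schwarz_ineq_sum)
  moreover have "(norm h)\<^sup>2 = (\<Sum>q\<in>UNIV. \<bar>h $ q\<bar>\<^sup>2)"
    by (simp add: power2_norm_eq_inner inner_vec_def flip: power2_eq_square)
  ultimately show ?thesis
    by simp
qed

lemma second_order_remainder_le_norm:
  fixes \<phi> :: "real^'n \<Rightarrow> real"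
  assumes "convex S" and a: "a \<in> S" and b: "b \<in> S"
    and d1: "\<forall>y\<in>S. (\<phi> has_derivative (\<lambda>h. \<Sum>q\<in>UNIV. d1 q y * h $ q)) (at y within S)"
    and d2: "\<forall>q. \<forall>y\<in>S. (d1 q has_derivative (\<lambda>h. \<Sum>r\<in>UNIV. d2 q r y * h $ r)) (at y within S)"
    and bnd: "\<forall>q r. \<forall>\<xi>\<in>S. \<bar>d2 q r \<xi>\<bar> \<le> \<beta>"
  shows "\<bar>\<phi> b - \<phi> a - (\<Sum>q\<in>UNIV. d1 q a * (b - a) $ q)\<bar> \<le> \<beta> / 2 * (real CARD('n) * (norm (b - a))\<^sup>2)"
proof -
  have "\<beta> \<ge> 0"
    using bnd a by (meson abs_ge_zero order_trans)
  then have "\<beta> / 2 * (\<Sum>q\<in>UNIV. \<bar>(b - a) $ q\<bar>)\<^sup>2 \<le> \<beta> / 2 * (real CARD('n) * (norm (b - a))\<^sup>2)"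
    using sum_abs_components_squared_le[of "b - a"] by (simp add: mult_left_mono)
  with second_order_remainder_le[OF assms] show ?thesis
    by linarith
qed

lemma norm_convex_combination_squared_le:
  fixes a :: "'i \<Rightarrow> 'a::real_normed_vector"
  assumes "finite J" and lam: "\<forall>j\<in>J. lam j \<ge> 0" "sum lam J = 1" and R: "\<And>j. j \<in> J \<Longrightarrow> norm (a j) \<le> R"
  shows "(norm (\<Sum>j\<in>J. lam j *\<^sub>R a j))\<^sup>2 \<le> (\<Sum>j\<in>J. lam j * norm (a j)) * R"
proof -
  define S where "S = (\<Sum>j\<in>J. lam j * norm (a j))"
  have "norm (\<Sum>j\<in>J. lam j *\<^sub>R a j) \<le> S"
    unfolding S_def using lam by (auto intro!: order_trans[OF norm_sum] sum_mono)
  moreover have "S \<le> (\<Sum>j\<in>J. lam j * R)"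
    unfolding S_def using lam R by (intro sum_mono mult_left_mono) auto
  then have "S \<le> R"
    using lam by (simp flip: sum_distrib_right)
  ultimately show ?thesis
    unfolding S_def power2_eq_square by (meson mult_mono norm_ge_zero order_trans)
qed

lemma barycentric_interpolation_error:
  fixes \<phi> :: "real^'n \<Rightarrow> real" and x :: "nat \<Rightarrow> nat \<Rightarrow> real^'n"
  assumes "convex S" and xS: "\<forall>j\<in>{0..CARD('n)}. x i j \<in> S" and "y \<in> S"
    and lam: "\<forall>j\<in>{0..CARD('n)}. lam j \<ge> 0" "(\<Sum>j=0..CARD('n). lam j) = 1"
    and y: "y = (\<Sum>j=0..CARD('n). lam j *\<^sub>R x i j)"
    and d1: "\<forall>y\<in>S. (\<phi> has_derivative (\<lambda>h. \<Sum>q\<in>UNIV. d1 q y * h $ q)) (at y within S)"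
    and d2: "\<forall>q. \<forall>y\<in>S. (d1 q has_derivative (\<lambda>h. \<Sum>r\<in>UNIV. d2 q r y * h $ r)) (at y within S)"
    and bnd: "\<forall>q r. \<forall>\<xi>\<in>S. \<bar>d2 q r \<xi>\<bar> \<le> \<beta>"
  shows "\<bar>\<phi> y - (\<Sum>j=0..CARD('n). lam j * \<phi> (x i j))\<bar> \<le> (\<Sum>j=0..CARD('n). lam j * (\<beta> * cij x i j))"
proof -
  define n where "n = CARD('n)"
  define J where "J = {0..n}"
  define a where "a j = x i j - x i 0" for j
  define dv where "dv = (\<chi> q. d1 q (x i 0))"
  define R where "R z = \<phi> z - \<phi> (x i 0) - dv \<bullet> (z - x i 0)" for z
  define Mx where "Mx = Max ((\<lambda>k. norm (a k)) ` {1..n})"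
  have R_le: "\<bar>R z\<bar> \<le> \<beta> / 2 * (real n * (norm (z - x i 0))\<^sup>2)" if "z \<in> S" for z
    using second_order_remainder_le_norm[OF \<open>convex S\<close> _ that d1 d2 bnd] xS
    by (simp add: R_def dv_def inner_vec_def n_def)
  have "\<beta> \<ge> 0"
    using bnd \<open>y \<in> S\<close> by (meson abs_ge_zero order_trans)
  have a_le: "norm (a j) \<le> Mx" if "j \<in> J" for j
  proof -
    have "1 \<le> n"
      by (simp add: n_def Suc_le_eq)
    then have "norm (a j) \<le> Mx" if "j \<in> {1..n}" for j
      using that unfolding Mx_def by (intro Max_ge) auto
    moreover have "norm (a 0) \<le> norm (a 1)"
      by (simp add: a_def)
    ultimately show ?thesis
      using that \<open>1 \<le> n\<close> by (cases "j = 0") (force simp: J_def)+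
  qed
  have lamJ: "\<forall>j\<in>J. lam j \<ge> 0" "sum lam J = 1"
    using lam by (simp_all add: J_def n_def)
  have ya: "y - x i 0 = (\<Sum>j\<in>J. lam j *\<^sub>R a j)"
    using y lamJ by (simp add: a_def J_def n_def scaleR_diff_right sum_subtractf flip: scaleR_sum_left)
  have "(\<Sum>j\<in>J. lam j * R (x i j))
      = (\<Sum>j\<in>J. lam j * \<phi> (x i j)) - (\<Sum>j\<in>J. lam j) * \<phi> (x i 0) - dv \<bullet> (\<Sum>j\<in>J. lam j *\<^sub>R a j)"
    by (simp add: R_def a_def algebra_simps sum_subtractf sum_distrib_left sum_distrib_right
        inner_sum_right sum.distrib)
  \<comment> \<open>the interpolation reproduces the affine part of the expansion at \<open>x i 0\<close> exactly\<close>
  then have "\<phi> y - (\<Sum>j\<in>J. lam j * \<phi> (x i j)) = R y - (\<Sum>j\<in>J. lam j * R (x i j))"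
    using lamJ by (simp add: R_def ya)
  then have "\<bar>\<phi> y - (\<Sum>j\<in>J. lam j * \<phi> (x i j))\<bar> \<le> \<bar>R y\<bar> + (\<Sum>j\<in>J. lam j * \<bar>R (x i j)\<bar>)"
    using lamJ by (auto simp: abs_mult intro!: order_trans[OF abs_triangle_ineq4] order_trans[OF sum_abs])
  also have "\<dots> \<le> \<beta> / 2 * (real n * ((\<Sum>j\<in>J. lam j * norm (a j)) * Mx))
      + (\<Sum>j\<in>J. lam j * (\<beta> / 2 * (real n * (norm (a j))\<^sup>2)))"
  proof (rule add_mono)
    have "(norm (y - x i 0))\<^sup>2 \<le> (\<Sum>j\<in>J. lam j * norm (a j)) * Mx"
      unfolding ya using lamJ a_le by (intro norm_convex_combination_squared_le) (auto simp: J_def)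
    then show "\<bar>R y\<bar> \<le> \<beta> / 2 * (real n * ((\<Sum>j\<in>J. lam j * norm (a j)) * Mx))"
      using R_le[OF \<open>y \<in> S\<close>] \<open>\<beta> \<ge> 0\<close> by (meson order_trans mult_left_mono of_nat_0_le_iff
          divide_nonneg_nonneg zero_le_numeral)
    show "(\<Sum>j\<in>J. lam j * \<bar>R (x i j)\<bar>) \<le> (\<Sum>j\<in>J. lam j * (\<beta> / 2 * (real n * (norm (a j))\<^sup>2)))"
      using R_le xS lamJ by (intro sum_mono mult_left_mono) (auto simp: a_def J_def n_def)
  qed
  also have "\<dots> = (\<Sum>j\<in>J. lam j * (\<beta> * cij x i j))"
    by (simp add: cij_def Mx_def a_def n_def power2_eq_square sum_distrib_left sum_distrib_right
        sum.distrib[symmetric] algebra_simps)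
  finally show ?thesis
    by (simp add: J_def n_def)
qed

section \<open>Simplices and the CPA interpolation\<close>

lemma triangulation_union:
  "triangulation \<Omega> mT x \<Longrightarrow> \<Omega> = (\<Union>i\<in>{1..mT}. tsimplex x i)"
  unfolding triangulation_def by simp

lemma triangulation_simplex_vertices:
  fixes x :: "nat \<Rightarrow> nat \<Rightarrow> real^'n"
  assumes "triangulation \<Omega> mT x" "i \<in> {1..mT}"
  shows "inj_on (x i) {0..CARD('n)}" "\<not> affine_dependent (x i ` {0..CARD('n)})"
  using assms unfolding triangulation_def by auto

lemma polytope_tsimplex: "polytope (tsimplex x i)"
  unfolding tsimplex_def polytope_def by blast

lemma convex_tsimplex: "convex (tsimplex x i)"
  unfolding tsimplex_def by simp

lemma compact_tsimplex: "compact (tsimplex x i)"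
  unfolding tsimplex_def by (simp add: finite_imp_compact_convex_hull)

lemma tsimplex_vertex: "j \<in> {0..CARD('n)} \<Longrightarrow> (x i j :: real^'n) \<in> tsimplex x i"
  unfolding tsimplex_def by (auto intro: hull_inc)

lemma tsimplex_barycentric:
  fixes x :: "nat \<Rightarrow> nat \<Rightarrow> real^'n"
  assumes inj: "inj_on (x i) {0..CARD('n)}" and "y \<in> tsimplex x i"
  obtains lam where "\<forall>j\<in>{0..CARD('n)}. lam j \<ge> 0" "(\<Sum>j=0..CARD('n). lam j) = 1"
    "y = (\<Sum>j=0..CARD('n). lam j *\<^sub>R x i j)"
proof -
  obtain w where w: "\<forall>z\<in>x i ` {0..CARD('n)}. 0 \<le> w z" "sum w (x i ` {0..CARD('n)}) = 1"
    "(\<Sum>z\<in>x i ` {0..CARD('n)}. w z *\<^sub>R z) = y"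
    using \<open>y \<in> tsimplex x i\<close> convex_hull_finite[of "x i ` {0..CARD('n)}"]
    unfolding tsimplex_def by auto
  show ?thesis
  proof (rule that[of "\<lambda>j. w (x i j)"])
    show "\<forall>j\<in>{0..CARD('n)}. w (x i j) \<ge> 0"
      using w(1) by auto
    show "(\<Sum>j=0..CARD('n). w (x i j)) = 1"
      using w(2) sum.reindex[OF inj, of w] by simp
    show "y = (\<Sum>j=0..CARD('n). w (x i j) *\<^sub>R x i j)"
      using w(3) sum.reindex[OF inj, of "\<lambda>z. w z *\<^sub>R z"] by simp
  qed
qed

lemma vidx_bij: "bij_betw (vidx :: 'n::finite \<Rightarrow> nat) UNIV {1..CARD('n)}"
proof -
  have "\<exists>e. bij_betw e (UNIV::'n set) {1..CARD('n)}"
    by (rule finite_same_card_bij) auto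
  then show ?thesis
    unfolding vidx_def by (rule someI_ex)
qed

lemma invertible_if_independent_rows:
  fixes r :: "'n \<Rightarrow> real^'n"
  assumes "inj r" and "independent (range r)"
  shows "invertible (\<chi> k. r k)"
  unfolding invertible_right_inverse matrix_right_invertible_independent_rows
proof (intro allI impI)
  fix c :: "'n \<Rightarrow> real" and k
  assume "(\<Sum>k\<in>UNIV. c k *s row k (\<chi> k. r k)) = 0"
  then have "(\<Sum>v\<in>range r. c (inv r v) *\<^sub>R v) = 0"
    using \<open>inj r\<close> by (simp add: sum.reindex row_def scalar_mult_eq_scaleR)
  then have "c (inv r (r k)) = 0"
    by (intro independentD[OF \<open>independent (range r)\<close> _ subset_refl]) auto
  then show "c k = 0"
    using \<open>inj r\<close> by simp
qed

lemma invertible_Xmat: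
  fixes x :: "nat \<Rightarrow> nat \<Rightarrow> real^'n"
  assumes inj: "inj_on (x i) {0..CARD('n)}" and indep: "\<not> affine_dependent (x i ` {0..CARD('n)})"
  shows "invertible (Xmat x i)"
proof -
  define r where "r k = - x i 0 + x i (vidx k)" for k :: 'n
  have vidx: "vidx ` (UNIV :: 'n set) = {1..CARD('n)}" "inj (vidx :: 'n \<Rightarrow> nat)"
    using vidx_bij by (auto simp: bij_betw_def)
  have "insert (x i 0) (x i ` {1..CARD('n)}) = x i ` {0..CARD('n)}"
    by (auto simp: image_iff) (metis Suc_le_eq atLeastAtMost_iff not_gr_zero)
  moreover have "x i 0 \<notin> x i ` {1..CARD('n)}"
    using inj unfolding inj_on_def by fastforce
  ultimately have "independent ((\<lambda>z. - x i 0 + z) ` x i ` {1..CARD('n)})"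
    using indep affine_dependent_iff_dependent by metis
  moreover have "range r = (\<lambda>z. - x i 0 + z) ` x i ` {1..CARD('n)}"
    unfolding r_def vidx(1)[symmetric] by (simp add: image_image)
  ultimately have "independent (range r)"
    by simp
  moreover have "inj r"
  proof
    fix k k' assume "r k = r k'"
    then have "x i (vidx k) = x i (vidx k')"
      by (simp add: r_def)
    moreover have "vidx k \<in> {0..CARD('n)}" "vidx k' \<in> {0..CARD('n)}"
      using vidx(1) by auto
    ultimately show "k = k'"
      using inj vidx(2) by (auto simp: inj_on_def inj_def)
  qed
  ultimately have "invertible (\<chi> k. r k)"
    by (rule invertible_if_independent_rows[rotated])
  then show ?thesis
    by (simp add: Xmat_def r_def)
qed

lemma matrix_mul_matrix_inv:
  fixes A :: "'a::semiring_1^'n^'n"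
  shows "invertible A \<Longrightarrow> A ** matrix_inv A = mat 1"
  unfolding invertible_def matrix_inv_def by (rule someI_ex[THEN conjunct1])

lemma Xmat_cpa_grad:
  fixes x :: "nat \<Rightarrow> nat \<Rightarrow> real^'n"
  assumes "inj_on (x i) {0..CARD('n)}" and "\<not> affine_dependent (x i ` {0..CARD('n)})"
  shows "Xmat x i *v cpa_grad x Wv i = Wbar x Wv i"
  using matrix_mul_matrix_inv[OF invertible_Xmat[where x=x and i=i, OF assms]]
  by (simp add: cpa_grad_def matrix_vector_mul_assoc)

definition cpa_affine :: "(nat \<Rightarrow> nat \<Rightarrow> real^'n) \<Rightarrow> (real^'n \<Rightarrow> real) \<Rightarrow> nat \<Rightarrow> real^'n \<Rightarrow> real" where
  "cpa_affine x Wv i y = Wv (x i 0) + cpa_grad x Wv i \<bullet> (y - x i 0)"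

lemma cpa_affine_alt:
  "cpa_affine x Wv i y = (Wv (x i 0) - cpa_grad x Wv i \<bullet> x i 0) + cpa_grad x Wv i \<bullet> y"
  by (simp add: cpa_affine_def inner_diff_right)

lemma cpa_affine_vertex:
  fixes x :: "nat \<Rightarrow> nat \<Rightarrow> real^'n"
  assumes tri: "triangulation \<Omega> mT x" and i: "i \<in> {1..mT}" and j: "j \<in> {0..CARD('n)}"
  shows "cpa_affine x Wv i (x i j) = Wv (x i j)"
proof (cases "j = 0")
  case True
  then show ?thesis
    by (simp add: cpa_affine_def)
next
  case False
  then have "j \<in> vidx ` (UNIV :: 'n set)"
    using vidx_bij[where 'n='n] j by (simp add: bij_betw_def)
  then obtain k :: 'n where k: "vidx k = j"
    by blast
  have "(Xmat x i *v cpa_grad x Wv i) $ k = Wbar x Wv i $ k"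
    by (simp add: Xmat_cpa_grad[where x=x and i=i, OF triangulation_simplex_vertices[OF tri i]])
  then have "(x i j - x i 0) \<bullet> cpa_grad x Wv i = Wv (x i j) - Wv (x i 0)"
    by (simp add: matrix_vector_mul_component Xmat_def Wbar_def k)
  then show ?thesis
    by (simp add: cpa_affine_def inner_commute)
qed

lemma cpa_affine_agree:
  fixes x :: "nat \<Rightarrow> nat \<Rightarrow> real^'n"
  assumes tri: "triangulation \<Omega> mT x" and i: "i \<in> {1..mT}" and k: "k \<in> {1..mT}"
    and "y \<in> tsimplex x i" and "y \<in> tsimplex x k"
  shows "cpa_affine x Wv i y = cpa_affine x Wv k y"
proof (cases "i = k")
  case False
  have "x i ` {0..CARD('n)} \<inter> x k ` {0..CARD('n)} \<subseteq> {z. cpa_affine x Wv i z = cpa_affine x Wv k z}"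
    using cpa_affine_vertex[OF tri i] cpa_affine_vertex[OF tri k] by fastforce
  moreover have "convex {z. cpa_affine x Wv i z = cpa_affine x Wv k z}"
  proof -
    have "{z. cpa_affine x Wv i z = cpa_affine x Wv k z}
        = {z. (cpa_grad x Wv i - cpa_grad x Wv k) \<bullet> z
              = (Wv (x k 0) - cpa_grad x Wv k \<bullet> x k 0) - (Wv (x i 0) - cpa_grad x Wv i \<bullet> x i 0)}"
      by (auto simp: cpa_affine_alt inner_diff_left)
    then show ?thesis
      by (simp add: convex_hyperplane)
  qed
  ultimately have "convex hull (x i ` {0..CARD('n)} \<inter> x k ` {0..CARD('n)})
      \<subseteq> {z. cpa_affine x Wv i z = cpa_affine x Wv k z}"
    by (rule hull_minimal)
  moreover have "y \<in> convex hull (x i ` {0..CARD('n)} \<inter> x k ` {0..CARD('n)})"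
    using tri i k assms(4,5) False unfolding triangulation_def by blast
  ultimately show ?thesis
    by blast
qed simp

lemma cpa_eq_cpa_affine:
  fixes x :: "nat \<Rightarrow> nat \<Rightarrow> real^'n"
  assumes tri: "triangulation \<Omega> mT x" and i: "i \<in> {1..mT}" and y: "y \<in> tsimplex x i"
  shows "cpa mT x Wv y = cpa_affine x Wv i y"
proof -
  define i' where "i' = (SOME i. i \<in> {1..mT} \<and> y \<in> tsimplex x i)"
  have "i' \<in> {1..mT} \<and> y \<in> tsimplex x i'"
    unfolding i'_def by (rule someI[of _ i]) (use i y in auto)
  then have "cpa_affine x Wv i' y = cpa_affine x Wv i y"
    using cpa_affine_agree[OF tri _ i _ y] by blast
  moreover have "cpa mT x Wv y = cpa_affine x Wv i' y"
    by (simp only: cpa_def Let_def cpa_affine_def i'_def)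
  ultimately show ?thesis
    by simp
qed

lemma cpa_pos:
  fixes x :: "nat \<Rightarrow> nat \<Rightarrow> real^'n"
  assumes tri: "triangulation \<Omega> mT x" and pos: "\<forall>v\<in>vertices mT x. Wv v > 0" and "y \<in> \<Omega>"
  shows "cpa mT x Wv y > 0"
proof -
  obtain i where i: "i \<in> {1..mT}" and y: "y \<in> tsimplex x i"
    using \<open>y \<in> \<Omega>\<close> triangulation_union[OF tri] by blast
  have "x i ` {0..CARD('n)} \<subseteq> {z. cpa_affine x Wv i z > 0}"
    using pos cpa_affine_vertex[OF tri i] i by (auto simp: vertices_def)
  moreover have "convex {z. cpa_affine x Wv i z > 0}"
  proof -
    have "{z. cpa_affine x Wv i z > 0} = {z. cpa_grad x Wv i \<bullet> z > cpa_grad x Wv i \<bullet> x i 0 - Wv (x i 0)}"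
      by (auto simp: cpa_affine_alt)
    then show ?thesis
      by (simp add: convex_halfspace_gt)
  qed
  ultimately have "tsimplex x i \<subseteq> {z. cpa_affine x Wv i z > 0}"
    unfolding tsimplex_def by (rule hull_minimal)
  then show ?thesis
    using y cpa_eq_cpa_affine[OF tri i y] by auto
qed

section \<open>Lipschitz continuity\<close>

lemma affine_le_mult_on_convex_hull:
  fixes V :: "'a::real_inner set"
  assumes "finite V" and \<tau>_nonneg: "\<forall>v\<in>V. \<tau> v \<ge> 0" and \<tau>_zero: "\<forall>v\<in>V. \<tau> v = 0 \<longrightarrow> Q v \<le> 0"
    and Q: "\<And>p. Q p = q0 + qv \<bullet> p" and \<tau>: "\<And>p. \<tau> p = t0 + tv \<bullet> p"
  shows "\<exists>C\<ge>0. \<forall>p\<in>convex hull V. Q p \<le> C * \<tau> p"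
proof -
  define C where "C = (\<Sum>v\<in>V. \<bar>Q v\<bar> / \<tau> v)"
  have "C \<ge> 0"
    unfolding C_def using \<tau>_nonneg by (auto intro!: sum_nonneg)
  have "Q v \<le> C * \<tau> v" if v: "v \<in> V" for v
  proof (cases "\<tau> v = 0")
    case False
    then have "\<tau> v > 0"
      using \<tau>_nonneg v by force
    moreover have "\<bar>Q v\<bar> / \<tau> v \<le> C"
      unfolding C_def using \<tau>_nonneg by (intro member_le_sum[OF v _ \<open>finite V\<close>]) auto
    ultimately show ?thesis
      by (simp add: field_simps)
  qed (use \<tau>_zero v in simp)
  moreover have "{p. Q p \<le> C * \<tau> p} = {p. (qv - C *\<^sub>R tv) \<bullet> p \<le> C * t0 - q0}"
    by (auto simp: Q \<tau> inner_diff_left algebra_simps)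
  ultimately have "convex hull V \<subseteq> {p. Q p \<le> C * \<tau> p}"
    by (intro hull_minimal) (auto simp: convex_halfspace_le)
  then show ?thesis
    using \<open>C \<ge> 0\<close> by blast
qed

lemma polytope_l1_dist_le:
  fixes S T :: "(real^'n) set"
  assumes "polytope S" "polytope T"
  shows "polytope {((y, z), s). y \<in> S \<and> z \<in> T \<and> (\<Sum>q\<in>UNIV. \<bar>y $ q - z $ q\<bar>) \<le> s \<and> s \<le> R}"
proof -
  define E where "E = (UNIV :: 'n set) \<rightarrow>\<^sub>E {-1, 1::real}"
  define H where "H \<epsilon> = {p :: ((real^'n) \<times> (real^'n)) \<times> real.
      ((vec_lambda \<epsilon>, - vec_lambda \<epsilon>), -1) \<bullet> p \<le> 0}" for \<epsilon>
  \<comment> \<open>the \<open>\<ell>\<^sub>1\<close> norm is the maximum of the linear forms with coefficients \<open>\<plusminus>1\<close>\<close>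
  have l1: "(\<Sum>q\<in>UNIV. \<bar>h $ q\<bar>) \<le> s \<longleftrightarrow> (\<forall>\<epsilon>\<in>E. (\<Sum>q\<in>UNIV. \<epsilon> q * h $ q) \<le> s)" for h :: "real^'n" and s
  proof
    assume le: "\<forall>\<epsilon>\<in>E. (\<Sum>q\<in>UNIV. \<epsilon> q * h $ q) \<le> s"
    have "(\<lambda>q. if h $ q \<ge> 0 then 1 else -1) \<in> E"
      by (simp add: E_def PiE_iff)
    from le[rule_format, OF this] have "(\<Sum>q\<in>UNIV. (if h $ q \<ge> 0 then 1 else -1) * h $ q) \<le> s"
      by simp
    moreover have "(\<Sum>q\<in>UNIV. (if h $ q \<ge> 0 then 1 else -1) * h $ q) = (\<Sum>q\<in>UNIV. \<bar>h $ q\<bar>)"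
      by (intro sum.cong) auto
    ultimately show "(\<Sum>q\<in>UNIV. \<bar>h $ q\<bar>) \<le> s"
      by simp
  next
    assume "(\<Sum>q\<in>UNIV. \<bar>h $ q\<bar>) \<le> s"
    moreover have "(\<Sum>q\<in>UNIV. \<epsilon> q * h $ q) \<le> (\<Sum>q\<in>UNIV. \<bar>h $ q\<bar>)" if "\<epsilon> \<in> E" for \<epsilon>
    proof (rule sum_mono)
      fix q
      have "\<epsilon> q = -1 \<or> \<epsilon> q = 1"
        using that by (auto simp: E_def PiE_iff)
      then show "\<epsilon> q * h $ q \<le> \<bar>h $ q\<bar>"
        by auto
    qed
    ultimately show "\<forall>\<epsilon>\<in>E. (\<Sum>q\<in>UNIV. \<epsilon> q * h $ q) \<le> s"
      by fastforce
  qed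
  have "{((y, z), s). y \<in> S \<and> z \<in> T \<and> (\<Sum>q\<in>UNIV. \<bar>y $ q - z $ q\<bar>) \<le> s \<and> s \<le> R}
      = ((S \<times> T) \<times> {0..R}) \<inter> \<Inter> (H ` E)"
  proof -
    have "((y, z), s) \<in> \<Inter> (H ` E) \<longleftrightarrow> (\<Sum>q\<in>UNIV. \<bar>(y - z) $ q\<bar>) \<le> s" for y z :: "real^'n" and s
      unfolding l1 by (simp add: H_def inner_vec_def sum_subtractf sum_negf algebra_simps)
    moreover have "0 \<le> s" if "(\<Sum>q\<in>UNIV. \<bar>(y - z) $ q\<bar>) \<le> s" for y z :: "real^'n" and s
      using that by (meson order_trans sum_nonneg abs_ge_zero)
    ultimately show ?thesis
      by auto
  qed
  moreover have "polytope ((S \<times> T) \<times> {0..R})"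
    using assms by (intro polytope_Times) (metis interval_cbox polytope_interval)+
  moreover have "polyhedron (\<Inter> (H ` E))"
    unfolding E_def H_def by (intro polyhedron_Inter finite_imageI finite_PiE) (auto simp: polyhedron_halfspace_le)
  ultimately show ?thesis
    by (simp add: polytope_eq_bounded_polyhedron bounded_Int)
qed

lemma sum_abs_components_le:
  fixes h :: "real^'n"
  shows "(\<Sum>q\<in>UNIV. \<bar>h $ q\<bar>) \<le> real CARD('n) * norm h"
  using sum_mono[of UNIV "\<lambda>q. \<bar>h $ q\<bar>" "\<lambda>_. norm h"] by (simp add: component_le_norm_cart)

text \<open>The mismatch is affine on the polytope of triples \<open>(y, z, s)\<close> with \<open>\<parallel>y - z\<parallel>\<^sub>1 \<le> s \<le> R\<close>,
  and is dominated by a multiple of \<open>s\<close> at its finitely many vertices, because those with \<open>s = 0\<close>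
  lie on the diagonal of \<open>S \<inter> T\<close>.\<close>

lemma affine_mismatch_le_dist:
  fixes S T :: "(real^'n) set" and a b :: "real^'n"
  assumes "polytope S" "polytope T" and agree: "\<forall>y\<in>S \<inter> T. c + a \<bullet> y = d + b \<bullet> y"
  shows "\<exists>C. \<forall>y\<in>S. \<forall>z\<in>T. \<bar>(c + a \<bullet> y) - (d + b \<bullet> z)\<bar> \<le> C * dist y z"
proof -
  define l1 where "l1 y z = (\<Sum>q\<in>UNIV. \<bar>y $ q - z $ q\<bar>)" for y z :: "real^'n"
  define Q where "Q p = (c + a \<bullet> fst (fst p)) - (d + b \<bullet> snd (fst p))"
    for p :: "((real^'n) \<times> (real^'n)) \<times> real"
  have "bounded (S \<union> T)"
    using assms by (simp add: polytope_imp_bounded)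
  then obtain B where B: "\<forall>y\<in>S \<union> T. norm y \<le> B"
    unfolding bounded_iff by blast
  define R where "R = real CARD('n) * (2 * B)"
  have l1_nonneg: "0 \<le> l1 y z" for y z
    by (simp add: l1_def sum_nonneg)
  have l1_le: "l1 y z \<le> real CARD('n) * dist y z" for y z
    using sum_abs_components_le[of "y - z"] by (simp add: l1_def dist_norm)
  have l1_R: "l1 y z \<le> R" if "y \<in> S" "z \<in> T" for y z
  proof -
    have "norm y \<le> B" "norm z \<le> B"
      using B that by auto
    then have "dist y z \<le> 2 * B"
      using norm_triangle_ineq4[of y z] by (simp add: dist_norm)
    then show ?thesis
      using l1_le[of y z] unfolding R_def by (meson mult_left_mono of_nat_0_le_iff order_trans)
  qed
  define P where "P = {((y, z), s). y \<in> S \<and> z \<in> T \<and> l1 y z \<le> s \<and> s \<le> R}"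
  have "polytope P"
    unfolding P_def l1_def by (rule polytope_l1_dist_le[OF assms(1,2)])
  then obtain V where "finite V" and PV: "P = convex hull V"
    unfolding polytope_def by blast
  have VP: "V \<subseteq> P"
    unfolding PV by (rule hull_subset)
  have V: "snd v \<ge> 0 \<and> (snd v = 0 \<longrightarrow> Q v = 0)" if "v \<in> V" for v
  proof -
    obtain y z s where v: "v = ((y, z), s)"
      using prod.exhaust by metis
    then have yz: "y \<in> S" "z \<in> T" "l1 y z \<le> s"
      using VP that unfolding P_def by auto
    moreover have "y = z" if "s = 0"
    proof -
      have "norm (y - z) \<le> 0"
        using yz(3) that by (intro order_trans[OF norm_le_l1_cart]) (simp add: l1_def)
      then show ?thesis
        by simp
    qed
    ultimately show ?thesis
      using agree l1_nonneg[of y z] by (auto simp: v Q_def)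
  qed
  have dominated: "\<exists>C\<ge>0. \<forall>p\<in>P. \<sigma> * Q p \<le> C * snd p" if "\<sigma> \<in> {1, -1}" for \<sigma> :: real
    unfolding PV
  proof (rule affine_le_mult_on_convex_hull[OF \<open>finite V\<close>])
    show "\<forall>v\<in>V. snd v \<ge> 0" "\<forall>v\<in>V. snd v = 0 \<longrightarrow> \<sigma> * Q v \<le> 0"
      using V by simp_all
    show "\<sigma> * Q p = \<sigma> * (c - d) + ((\<sigma> *\<^sub>R a, - \<sigma> *\<^sub>R b), 0) \<bullet> p" for p
      by (simp add: Q_def inner_prod_def algebra_simps)
    show "snd p = 0 + ((0, 0), 1) \<bullet> p" for p :: "((real^'n) \<times> (real^'n)) \<times> real"
      by (simp add: inner_prod_def)
  qed
  obtain C1 C2 where "C1 \<ge> 0" and C1: "\<forall>p\<in>P. Q p \<le> C1 * snd p" and C2: "\<forall>p\<in>P. - Q p \<le> C2 * snd p"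
    using dominated[of 1] dominated[of "-1"] by auto
  show ?thesis
  proof (intro exI ballI)
    fix y z assume "y \<in> S" "z \<in> T"
    then have "((y, z), l1 y z) \<in> P"
      using l1_R by (simp add: P_def)
    then have "Q ((y, z), l1 y z) \<le> C1 * l1 y z" "- Q ((y, z), l1 y z) \<le> C2 * l1 y z"
      using C1 C2 by fastforce+
    moreover have "C1 * l1 y z \<le> max C1 C2 * l1 y z" "C2 * l1 y z \<le> max C1 C2 * l1 y z"
      by (intro mult_right_mono l1_nonneg; simp)+
    ultimately have "\<bar>Q ((y, z), l1 y z)\<bar> \<le> max C1 C2 * l1 y z"
      by linarith
    also have "\<dots> \<le> max C1 C2 * real CARD('n) * dist y z"
      using l1_le \<open>C1 \<ge> 0\<close> by (simp add: mult.assoc mult_left_mono)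
    finally show "\<bar>(c + a \<bullet> y) - (d + b \<bullet> z)\<bar> \<le> max C1 C2 * real CARD('n) * dist y z"
      by (simp add: Q_def)
  qed
qed

lemma cpa_affine_mismatch_le_dist:
  fixes x :: "nat \<Rightarrow> nat \<Rightarrow> real^'n"
  assumes tri: "triangulation \<Omega> mT x" and i: "i \<in> {1..mT}" and k: "k \<in> {1..mT}"
  shows "\<exists>C. \<forall>y\<in>tsimplex x i. \<forall>z\<in>tsimplex x k.
           \<bar>cpa_affine x Wv i y - cpa_affine x Wv k z\<bar> \<le> C * dist y z"
proof -
  let ?c = "\<lambda>i. Wv (x i 0) - cpa_grad x Wv i \<bullet> x i 0"
  have "\<forall>y\<in>tsimplex x i \<inter> tsimplex x k. ?c i + cpa_grad x Wv i \<bullet> y = ?c k + cpa_grad x Wv k \<bullet> y"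
    using cpa_affine_agree[OF tri i k] by (simp flip: cpa_affine_alt)
  from affine_mismatch_le_dist[OF polytope_tsimplex polytope_tsimplex this]
  show ?thesis
    by (simp only: cpa_affine_alt)
qed

lemma cpa_lipschitz:
  fixes x :: "nat \<Rightarrow> nat \<Rightarrow> real^'n"
  assumes tri: "triangulation \<Omega> mT x"
  shows "\<exists>L. L-lipschitz_on \<Omega> (cpa mT x Wv)"
proof -
  let ?I = "{1..mT} \<times> {1..mT}"
  have "\<forall>ik\<in>?I. \<exists>C. \<forall>y\<in>tsimplex x (fst ik). \<forall>z\<in>tsimplex x (snd ik).
      \<bar>cpa_affine x Wv (fst ik) y - cpa_affine x Wv (snd ik) z\<bar> \<le> C * dist y z"
    using cpa_affine_mismatch_le_dist[OF tri] by auto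
  then obtain C where C: "\<forall>ik\<in>?I. \<forall>y\<in>tsimplex x (fst ik). \<forall>z\<in>tsimplex x (snd ik).
      \<bar>cpa_affine x Wv (fst ik) y - cpa_affine x Wv (snd ik) z\<bar> \<le> C ik * dist y z"
    by (rule bchoice[THEN exE])
  define L where "L = (\<Sum>ik\<in>?I. \<bar>C ik\<bar>)"
  have "L-lipschitz_on \<Omega> (cpa mT x Wv)"
  proof (rule lipschitz_onI)
    show "0 \<le> L"
      unfolding L_def by (simp add: sum_nonneg)
    fix y z assume "y \<in> \<Omega>" "z \<in> \<Omega>"
    then obtain i k where ik: "(i, k) \<in> ?I" and y: "y \<in> tsimplex x i" and z: "z \<in> tsimplex x k"
      using triangulation_union[OF tri] by blast
    have "dist (cpa mT x Wv y) (cpa mT x Wv z) = \<bar>cpa_affine x Wv i y - cpa_affine x Wv k z\<bar>"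
      using ik cpa_eq_cpa_affine[OF tri _ y] cpa_eq_cpa_affine[OF tri _ z] by (simp add: dist_real_def)
    also have "\<dots> \<le> C (i, k) * dist y z"
      using C ik y z by auto
    also have "\<dots> \<le> L * dist y z"
    proof (rule mult_right_mono)
      have "C (i, k) \<le> \<bar>C (i, k)\<bar>"
        by simp
      also have "\<dots> \<le> L"
        unfolding L_def using ik by (intro member_le_sum) auto
      finally show "C (i, k) \<le> L" .
    qed simp
    finally show "dist (cpa mT x Wv y) (cpa mT x Wv z) \<le> L * dist y z" .
  qed
  then show ?thesis ..
qed

section \<open>The Dini derivative along the vector field\<close>

lemma frequently_imp_eventually_ray_in:
  fixes S :: "'a::real_normed_vector set"
  assumes "convex S" "closed S" and freq: "\<exists>\<^sub>F h in at_right 0. y + h *\<^sub>R v \<in> S"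
  shows "\<forall>\<^sub>F h in at_right 0. y + h *\<^sub>R v \<in> S"
proof -
  have lim: "((\<lambda>h. y + h *\<^sub>R v) \<longlongrightarrow> y) (at_right 0)"
    by (auto intro!: tendsto_eq_intros)
  have "y \<in> S"
  proof (rule ccontr)
    assume "y \<notin> S"
    then have "\<forall>\<^sub>F h in at_right 0. y + h *\<^sub>R v \<in> - S"
      using topological_tendstoD[OF lim, of "- S"] \<open>closed S\<close> by auto
    then show False
      using freq by (simp add: frequently_def)
  qed
  from freq obtain h1 where h1: "0 < h1" "h1 < 1" "y + h1 *\<^sub>R v \<in> S"
    unfolding frequently_def eventually_at_right_field by (metis zero_less_one)
  show ?thesis
    unfolding eventually_at_right_field
  proof (intro exI conjI allI impI)
    fix h :: real assume "0 < h" "h < h1"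
    then have "(1 - h / h1) *\<^sub>R y + (h / h1) *\<^sub>R (y + h1 *\<^sub>R v) \<in> S"
      using \<open>convex S\<close> \<open>y \<in> S\<close> h1 by (intro convexD) auto
    then show "y + h *\<^sub>R v \<in> S"
      using h1 by (simp add: algebra_simps)
  qed (fact \<open>0 < h1\<close>)
qed

lemma ray_eventually_in_simplex:
  fixes x :: "nat \<Rightarrow> nat \<Rightarrow> real^'n"
  assumes tri: "triangulation \<Omega> mT x" and y: "y \<in> interior \<Omega>"
  obtains i where "i \<in> {1..mT}" "y \<in> tsimplex x i" "\<forall>\<^sub>F h in at_right 0. y + h *\<^sub>R v \<in> tsimplex x i"
proof -
  have lim: "((\<lambda>h. y + h *\<^sub>R v) \<longlongrightarrow> y) (at_right 0)"
    by (auto intro!: tendsto_eq_intros)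
  have "\<forall>\<^sub>F h in at_right 0. y + h *\<^sub>R v \<in> interior \<Omega>"
    using topological_tendstoD[OF lim, of "interior \<Omega>"] y by auto
  then have cover: "\<forall>\<^sub>F h in at_right 0. \<exists>i\<in>{1..mT}. y + h *\<^sub>R v \<in> tsimplex x i"
    by (rule eventually_mono) (use triangulation_union[OF tri] interior_subset in blast)
  \<comment> \<open>finitely many simplices cover a neighbourhood of \<open>y\<close>, so the ray meets one of them frequently\<close>
  have "\<exists>i\<in>{1..mT}. \<exists>\<^sub>F h in at_right 0. y + h *\<^sub>R v \<in> tsimplex x i"
  proof (rule ccontr)
    assume "\<not> ?thesis"
    then have "\<forall>i\<in>{1..mT}. \<forall>\<^sub>F h in at_right 0. y + h *\<^sub>R v \<notin> tsimplex x i"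
      by (simp add: frequently_def)
    then have "\<forall>\<^sub>F h in at_right 0. \<forall>i\<in>{1..mT}. y + h *\<^sub>R v \<notin> tsimplex x i"
      by (rule eventually_ball_finite[rotated]) simp
    with cover have "\<forall>\<^sub>F h in at_right (0::real). False"
      by eventually_elim blast
    then show False
      by simp
  qed
  then obtain i where i: "i \<in> {1..mT}" and "\<exists>\<^sub>F h in at_right 0. y + h *\<^sub>R v \<in> tsimplex x i"
    by blast
  then have ev: "\<forall>\<^sub>F h in at_right 0. y + h *\<^sub>R v \<in> tsimplex x i"
    by (intro frequently_imp_eventually_ray_in convex_tsimplex compact_imp_closed compact_tsimplex)
  moreover have "y \<in> tsimplex x i"
    using Lim_in_closed_set[OF compact_imp_closed[OF compact_tsimplex] ev _ lim] by simp
  ultimately show ?thesis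
    using i that by blast
qed

lemma dini_upper_cpa:
  fixes x :: "nat \<Rightarrow> nat \<Rightarrow> real^'n"
  assumes tri: "triangulation \<Omega> mT x" and i: "i \<in> {1..mT}" and y: "y \<in> tsimplex x i"
    and ev: "\<forall>\<^sub>F h in at_right 0. y + h *\<^sub>R v \<in> tsimplex x i"
  shows "dini_upper (cpa mT x Wv) y v = ereal (cpa_grad x Wv i \<bullet> v)"
proof -
  have "\<forall>\<^sub>F h in at_right 0. ereal ((cpa mT x Wv (y + h *\<^sub>R v) - cpa mT x Wv y) / h)
      = ereal (cpa_grad x Wv i \<bullet> v)"
    using ev eventually_at_right_less
  proof eventually_elim
    case (elim h)
    then have "cpa mT x Wv (y + h *\<^sub>R v) - cpa mT x Wv y = h * (cpa_grad x Wv i \<bullet> v)"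
      using cpa_eq_cpa_affine[OF tri i elim(1), of Wv] cpa_eq_cpa_affine[OF tri i y, of Wv]
      by (simp add: cpa_affine_def algebra_simps inner_add_right)
    then show ?case
      using elim(2) by simp
  qed
  then have "((\<lambda>h. ereal ((cpa mT x Wv (y + h *\<^sub>R v) - cpa mT x Wv y) / h))
      \<longlongrightarrow> ereal (cpa_grad x Wv i \<bullet> v)) (at_right 0)"
    by (rule tendsto_eventually)
  then show ?thesis
    unfolding dini_upper_def by (intro lim_imp_Limsup) simp_all
qed

lemma row_sum_abs_le_matnorm_inf: "(\<Sum>k\<in>UNIV. \<bar>A $ p $ k\<bar>) \<le> matnorm_inf (A :: real^'m^'n)"
  unfolding matnorm_inf_def by (rule Max_ge) auto

lemma matnorm_inf_le_norm: "matnorm_inf (A :: real^'m^'n) \<le> real CARD('m) * norm A"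
proof -
  have "(\<Sum>k\<in>UNIV. \<bar>A $ p $ k\<bar>) \<le> (\<Sum>k\<in>(UNIV::'m set). norm A)" for p
    by (rule sum_mono) (meson component_le_norm_cart Finite_Cartesian_Product.norm_nth_le order_trans)
  then show ?thesis
    unfolding matnorm_inf_def by (subst Max_le_iff) auto
qed

lemma matnorm_inf_le_ghat:
  fixes G :: "real^'n \<Rightarrow> real^'m^'n" and x :: "nat \<Rightarrow> nat \<Rightarrow> real^'n"
  assumes "continuous_on (tsimplex x i) G" and "y \<in> tsimplex x i"
  shows "matnorm_inf (G y) \<le> ghat G x i"
proof -
  have "bounded (G ` tsimplex x i)"
    using assms(1) by (intro compact_imp_bounded compact_continuous_image compact_tsimplex)
  then obtain B where B: "\<forall>z\<in>tsimplex x i. norm (G z) \<le> B"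
    unfolding bounded_iff by auto
  have "bdd_above ((\<lambda>z. matnorm_inf (G z)) ` tsimplex x i)"
  proof (rule bdd_aboveI2)
    fix z assume "z \<in> tsimplex x i"
    then show "matnorm_inf (G z) \<le> real CARD('m) * B"
      using B matnorm_inf_le_norm[of "G z"] by (meson mult_left_mono of_nat_0_le_iff order_trans)
  qed
  then show ?thesis
    unfolding ghat_def by (rule cSUP_upper[OF assms(2)])
qed

lemma abs_matrix_vector_component_le:
  fixes A :: "real^'m^'n"
  assumes "\<forall>k. \<bar>u $ k\<bar> \<le> r"
  shows "\<bar>(A *v u) $ p\<bar> \<le> matnorm_inf A * r"
proof -
  have "\<bar>(A *v u) $ p\<bar> \<le> (\<Sum>k\<in>UNIV. \<bar>A $ p $ k\<bar> * r)"
    unfolding matrix_vector_mult_def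
    using assms by (auto simp: abs_mult intro!: order_trans[OF sum_abs] sum_mono mult_left_mono)
  also have "\<dots> \<le> matnorm_inf A * r"
    using assms row_sum_abs_le_matnorm_inf[of A p] order_trans[OF abs_ge_zero assms[rule_format]]
    by (simp add: mult_right_mono flip: sum_distrib_right)
  finally show ?thesis .
qed

lemma inner_le_inner_plus_componentwise_error:
  fixes g w v l :: "real^'n"
  assumes "\<forall>p. \<bar>g $ p\<bar> \<le> l $ p" and "\<forall>p. \<bar>w $ p - v $ p\<bar> \<le> E"
  shows "g \<bullet> w \<le> g \<bullet> v + (\<Sum>p\<in>UNIV. l $ p) * E"
proof -
  have "g $ p * (w $ p - v $ p) \<le> l $ p * E" for p
  proof -
    have "g $ p * (w $ p - v $ p) \<le> \<bar>g $ p\<bar> * \<bar>w $ p - v $ p\<bar>"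
      by (simp flip: abs_mult)
    also have "\<dots> \<le> l $ p * E"
      using assms by (intro mult_mono) (auto intro: order_trans[OF abs_ge_zero])
    finally show ?thesis .
  qed
  then have "(\<Sum>p\<in>UNIV. g $ p * (w $ p - v $ p)) \<le> (\<Sum>p\<in>UNIV. l $ p * E)"
    by (rule sum_mono)
  then show ?thesis
    by (simp add: inner_vec_def algebra_simps sum_subtractf sum_distrib_left)
qed

lemma vector_field_interpolation_error:
  fixes f :: "real^'n \<Rightarrow> real^'n" and x :: "nat \<Rightarrow> nat \<Rightarrow> real^'n"
  assumes fC2: "\<forall>p. C2_on (\<lambda>y. f y $ p) (tsimplex x i)"
    and beta: "\<forall>p d2. second_partials (\<lambda>y. f y $ p) (tsimplex x i) d2 \<longrightarrow>
                 (\<forall>q r. \<forall>\<xi>\<in>tsimplex x i. \<bar>d2 q r \<xi>\<bar> \<le> \<beta> i)"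
    and y: "y \<in> tsimplex x i"
    and lam: "\<forall>j\<in>{0..CARD('n)}. lam j \<ge> 0" "(\<Sum>j=0..CARD('n). lam j) = 1"
      "y = (\<Sum>j=0..CARD('n). lam j *\<^sub>R x i j)"
  shows "\<bar>f y $ p - (\<Sum>j=0..CARD('n). lam j * f (x i j) $ p)\<bar>
           \<le> (\<Sum>j=0..CARD('n). lam j * (\<beta> i * cij x i j))"
proof -
  obtain d2 where d2: "second_partials (\<lambda>z. f z $ p) (tsimplex x i) d2"
    using fC2 unfolding C2_on_def by blast
  then have bnd: "\<forall>q r. \<forall>\<xi>\<in>tsimplex x i. \<bar>d2 q r \<xi>\<bar> \<le> \<beta> i"
    using beta by blast
  from d2 obtain d1 where
    "\<forall>y\<in>tsimplex x i. ((\<lambda>z. f z $ p) has_derivative (\<lambda>h. \<Sum>q\<in>UNIV. d1 q y * h $ q)) (at y within tsimplex x i)"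
    "\<forall>q. \<forall>y\<in>tsimplex x i. (d1 q has_derivative (\<lambda>h. \<Sum>r\<in>UNIV. d2 q r y * h $ r)) (at y within tsimplex x i)"
    unfolding second_partials_def by blast
  moreover have "\<forall>j\<in>{0..CARD('n)}. x i j \<in> tsimplex x i"
    using tsimplex_vertex by blast
  ultimately show ?thesis
    using barycentric_interpolation_error[where x=x and i=i, OF convex_tsimplex _ y lam _ _ bnd]
    by blast
qed

lemma cpa_grad_inner_field_le:
  fixes f :: "real^'n \<Rightarrow> real^'n" and G :: "real^'n \<Rightarrow> real^'m^'n" and x :: "nat \<Rightarrow> nat \<Rightarrow> real^'n"
  assumes fC2: "\<forall>p. C2_on (\<lambda>y. f y $ p) (tsimplex x i)"
    and beta: "\<forall>p d2. second_partials (\<lambda>y. f y $ p) (tsimplex x i) d2 \<longrightarrow>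
                 (\<forall>q r. \<forall>\<xi>\<in>tsimplex x i. \<bar>d2 q r \<xi>\<bar> \<le> \<beta> i)"
    and GC: "continuous_on (tsimplex x i) G"
    and inj: "inj_on (x i) {0..CARD('n)}"
    and l: "\<forall>k. \<bar>cpa_grad x Wv i $ k\<bar> \<le> l i $ k"
    and D: "\<forall>j\<in>{0..CARD('n)}. Dij f G x \<beta> Wv l uh i j \<le> - b2"
    and y: "y \<in> tsimplex x i" and u: "\<forall>k. \<bar>u $ k\<bar> \<le> uh"
  shows "cpa_grad x Wv i \<bullet> (f y + G y *v u) \<le> - b2"
proof -
  define g where "g = cpa_grad x Wv i"
  define L where "L = (\<Sum>p\<in>UNIV. l i $ p)"
  obtain lam where lam: "\<forall>j\<in>{0..CARD('n)}. lam j \<ge> 0" "(\<Sum>j=0..CARD('n). lam j) = 1"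
    "y = (\<Sum>j=0..CARD('n). lam j *\<^sub>R x i j)"
    using tsimplex_barycentric[OF inj y] by blast
  define E where "E = (\<Sum>j=0..CARD('n). lam j * (\<beta> i * cij x i j))"
  define F where "F = (\<Sum>j=0..CARD('n). lam j *\<^sub>R f (x i j))"
  have "g \<bullet> f y \<le> g \<bullet> F + L * E"
    unfolding L_def E_def g_def
    using l vector_field_interpolation_error[where x=x and i=i and f=f and \<beta>=\<beta>, OF fC2 beta y lam]
    by (intro inner_le_inner_plus_componentwise_error) (auto simp: F_def sum_component)
  moreover have "g \<bullet> (G y *v u) \<le> g \<bullet> 0 + L * (ghat G x i * uh)"
    unfolding L_def g_def
  proof (intro inner_le_inner_plus_componentwise_error allI)
    have "uh \<ge> 0"
      using u abs_ge_zero order_trans by blast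
    then show "\<bar>(G y *v u) $ p - 0 $ p\<bar> \<le> ghat G x i * uh" for p
      using abs_matrix_vector_component_le[OF u, of "G y" p] matnorm_inf_le_ghat[OF GC y]
      by (simp add: order_trans[OF _ mult_right_mono])
  qed (use l in simp)
  moreover have "(\<Sum>j=0..CARD('n). lam j * Dij f G x \<beta> Wv l uh i j)
      = (\<Sum>j=0..CARD('n). lam j * (g \<bullet> f (x i j))) + L * E + (\<Sum>j=0..CARD('n). lam j) * (L * (ghat G x i * uh))"
    unfolding Dij_def E_def L_def[symmetric] g_def[symmetric]
    by (simp add: sum.distrib sum_distrib_left sum_distrib_right algebra_simps inner_commute)
  then have "(\<Sum>j=0..CARD('n). lam j * Dij f G x \<beta> Wv l uh i j) = g \<bullet> F + L * E + L * (ghat G x i * uh)"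
    using lam(2) by (simp add: F_def inner_sum_right)
  moreover have "(\<Sum>j=0..CARD('n). lam j * Dij f G x \<beta> Wv l uh i j) \<le> (\<Sum>j=0..CARD('n). lam j) * - b2"
    unfolding sum_distrib_right using D lam(1) by (intro sum_mono mult_left_mono) auto
  ultimately show ?thesis
    using lam(2) by (simp add: g_def inner_add_right)
qed

lemma dini_upper_cpa_le:
  fixes f :: "real^'n \<Rightarrow> real^'n" and G :: "real^'n \<Rightarrow> real^'m^'n" and x :: "nat \<Rightarrow> nat \<Rightarrow> real^'n"
  assumes tri: "triangulation \<Omega> mT x"
    and fC2: "\<forall>i\<in>{1..mT}. \<forall>p. C2_on (\<lambda>y. f y $ p) (tsimplex x i)"
    and GC: "continuous_on \<Omega> G"
    and beta: "\<forall>i\<in>{1..mT}. \<forall>p d2. second_partials (\<lambda>y. f y $ p) (tsimplex x i) d2 \<longrightarrow>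
                 (\<forall>q r. \<forall>\<xi>\<in>tsimplex x i. \<bar>d2 q r \<xi>\<bar> \<le> \<beta> i)"
    and cond: "cpa_conditions f G mT x \<beta> A1 Wv l b2 uh"
    and y: "y \<in> interior (\<Omega> - A1)" and u: "\<forall>k. \<bar>u $ k\<bar> \<le> uh"
  shows "dini_upper (cpa mT x Wv) y (f y + G y *v u) \<le> ereal (- b2)"
proof -
  have "y \<in> interior \<Omega>" "y \<notin> A1"
    using y interior_mono[of "\<Omega> - A1" \<Omega>] interior_subset by blast+
  then obtain i where i: "i \<in> {1..mT}" and yi: "y \<in> tsimplex x i"
    and ev: "\<forall>\<^sub>F h in at_right 0. y + h *\<^sub>R (f y + G y *v u) \<in> tsimplex x i"
    using ray_eventually_in_simplex[OF tri] by metis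
  have "i \<in> I1 mT x A1"
    using i yi \<open>y \<notin> A1\<close> by (auto simp: I1_def)
  moreover have "tsimplex x i \<subseteq> \<Omega>"
    using i triangulation_union[OF tri] by blast
  then have "continuous_on (tsimplex x i) G"
    using GC continuous_on_subset by blast
  ultimately have "cpa_grad x Wv i \<bullet> (f y + G y *v u) \<le> - b2"
    using fC2 beta cond i triangulation_simplex_vertices[OF tri i] yi u
    by (intro cpa_grad_inner_field_le[where i=i]) (auto simp: cpa_conditions_def)
  then show ?thesis
    using dini_upper_cpa[OF tri i yi ev] by simp
qed

theorem theorem2:
  fixes \<Omega> A1 :: "(real^'n) set"
    and f :: "real^'n \<Rightarrow> real^'n"
    and G :: "real^'n \<Rightarrow> real^'m^'n"
    and \<kappa> :: "real \<Rightarrow> real^'m"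
    and mT :: nat
    and x :: "nat \<Rightarrow> nat \<Rightarrow> real^'n"
    and \<beta> :: "nat \<Rightarrow> real"
  assumes reg: "region \<Omega>"
    and f0: "f 0 = 0"
    and tri: "triangulation \<Omega> mT x"
    and fC2: "continuous_on \<Omega> f \<and> (\<forall>i\<in>{1..mT}. \<forall>p. C2_on (\<lambda>y. f y $ p) (tsimplex x i))"
    and GC2: "continuous_on \<Omega> G \<and> (\<forall>i\<in>{1..mT}. \<forall>p k. C2_on (\<lambda>y. G y $ p $ k) (tsimplex x i))"
    and A1reg: "region A1"
    and A1sub: "A1 \<subset> \<Omega>"
    and A1bd: "frontier A1 \<subseteq> (\<Union>i\<in>{1..mT}. frontier (tsimplex x i))"
    and beta: "\<forall>i\<in>{1..mT}. \<forall>p d2. second_partials (\<lambda>y. f y $ p) (tsimplex x i) d2 \<longrightarrow>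
                 (\<forall>q r. \<forall>\<xi>\<in>tsimplex x i. \<bar>d2 q r \<xi>\<bar> \<le> \<beta> i)"
  shows "(\<exists>Wv l b2 uh. cpa_conditions f G mT x \<beta> A1 Wv l b2 uh)
       \<and> (\<forall>Wv l b2 uh c.
            cpa_conditions f G mT x \<beta> A1 Wv l b2 uh \<and> b2 > 0
            \<and> A1 \<subset> {y\<in>\<Omega>. cpa mT x Wv y \<le> c} \<and> {y\<in>\<Omega>. cpa mT x Wv y \<le> c} \<subseteq> \<Omega>
            \<and> (\<forall>t\<ge>0. \<forall>k. \<bar>\<kappa> t $ k\<bar> \<le> uh)
          \<longrightarrow> (\<exists>L. L-lipschitz_on \<Omega> (cpa mT x Wv))
            \<and> (\<forall>y\<in>\<Omega>. cpa mT x Wv y > 0)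
            \<and> (\<forall>y\<in>interior (\<Omega> - A1). \<forall>u :: real^'m. (\<forall>k. \<bar>u $ k\<bar> \<le> uh) \<longrightarrow>
                 dini_upper (cpa mT x Wv) y (f y + G y *v u) \<le> ereal (- b2)))"
proof (intro conjI allI impI ballI)
  have "cpa_grad x (\<lambda>_. 1) i = 0" for i
    by (simp add: cpa_grad_def Wbar_def vec_eq_iff matrix_vector_mult_def)
  then have "cpa_conditions f G mT x \<beta> A1 (\<lambda>_. 1) (\<lambda>_. 0) 0 1"
    by (simp add: cpa_conditions_def Dij_def)
  then show "\<exists>Wv l b2 uh. cpa_conditions f G mT x \<beta> A1 Wv l b2 uh"
    by blast
next
  fix Wv l b2 uh c
  assume "cpa_conditions f G mT x \<beta> A1 Wv l b2 uh \<and> b2 > 0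
    \<and> A1 \<subset> {y\<in>\<Omega>. cpa mT x Wv y \<le> c} \<and> {y\<in>\<Omega>. cpa mT x Wv y \<le> c} \<subseteq> \<Omega>
    \<and> (\<forall>t\<ge>0. \<forall>k. \<bar>\<kappa> t $ k\<bar> \<le> uh)"
  then have cond: "cpa_conditions f G mT x \<beta> A1 Wv l b2 uh"
    by blast
  show "\<exists>L. L-lipschitz_on \<Omega> (cpa mT x Wv)"
    by (rule cpa_lipschitz[OF tri])
  show "cpa mT x Wv y > 0" if "y \<in> \<Omega>" for y
    using cpa_pos[OF tri _ that] cond by (simp add: cpa_conditions_def)
  show "dini_upper (cpa mT x Wv) y (f y + G y *v u) \<le> ereal (- b2)"
    if "y \<in> interior (\<Omega> - A1)" "\<forall>k. \<bar>u $ k\<bar> \<le> uh" for y and u :: "real^'m"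
    using dini_upper_cpa_le[OF tri conjunct2[OF fC2] conjunct1[OF GC2] beta cond that] .
qed

end
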